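(* Let $V$ and $W$ be calibrated $R$-supermodules and regard $V\oplus W$ as a calibrated $R$-supermodule via $(V\oplus W)_{\mathfrak a}=V_{\mathfrak a}\oplus W_{\mathfrak a}$ and $(V\oplus W)_{\mathfrak c}=V_{\mathfrak c}\oplus W_{\mathfrak c}$. Then for every $d\ge 0$ the map \[\bigoplus_{d_1+d_2=d}(\tilde\Gamma^{d_1}V)\otimes(\tilde\Gamma^{d_2}W)\longrightarrow\tilde\Gamma^d(V\oplus W),\qquad y\otimes y'\mapsto y*y',\] is an isomorphism of $R$-supermodules.
   Context: Let $R$ be a principal ideal domain of characteristic $0$. Supermodules are $\mathbb Z/2$-graded and $|v|$ denotes the parity of a homogeneous element $v$. A calibrated $R$-supermodule is a free $R$-supermodule $V=V_{\bar0}\oplus V_{\bar1}$ of finite rank together with a decomposition $V_{\bar 0}=V_{\mathfrak a}\oplus V_{\mathfrak c}$ into free $R$-submodules. Fix bases $B_{\mathfrak a},B_{\mathfrak c},B_{\bar1}$ of $V_{\mathfrak a},V_{\mathfrak c},V_{\bar1}$, put $B_{\bar0}=B_{\mathfrak a}\sqcup B_{\mathfrak c}$, $B=B_{\bar0}\sqcup B_{\bar1}$, and fix a total order on $B$. The symmetric group $\mathfrak S_d$ acts on the right on $V^{\otimes d}$ by $(v_1\otimes\cdots\otimes v_d)^\sigma=(-1)^{\langle\sigma;\mathbf v\rangle}v_{\sigma1}\otimes\cdots\otimes v_{\sigma d}$ for homogeneous $v_k$, where $\langle\sigma;\mathbf v\rangle$ is the number of pairs $k<l$ with $\sigma^{-1}k>\sigma^{-1}l$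 and $|v_k|=|v_l|=\bar1$; $\Gamma^dV$ is the submodule of $\mathfrak S_d$-invariants. $\mathfrak S_d$ acts on $B^d$ by $(b_1\cdots b_d)\sigma=b_{\sigma1}\cdots b_{\sigma d}$ and $\mathbf b\sim\mathbf b'$ means they lie in one orbit. For $\mathbf b=b_1\cdots b_d\in B^d$ let $\langle\mathbf b\rangle$ be the number of pairs $k<l$ with $b_k,b_l\in B_{\bar1}$ and $b_k>b_l$, let $[\mathbf b:b]=\#\{k:b_k=b\}$ and $[\mathbf b]^!_{\mathfrak c}=\prod_{b\in B_{\mathfrak c}}[\mathbf b:b]!$. Let $\mathrm{Seq}(B,d)$ be the set of $\mathbf b\in B^d$ such that $b_k=b_l$ for some $k\ne l$ only if $b_k\in B_{\bar0}$. For $\mathbf b\in\mathrm{Seq}(B,d)$ put $x_{\mathbf b}=\sum_{\mathbf b'}(-1)^{\langle\mathbf b\rangle+\langle\mathbf b'\rangle}b'_1\otimes\cdots\otimes b'_d$ (sum over the distinct $\mathbf b'\sim\mathbf b$) and $y_{\mathbf b}=[\mathbf b]^!_{\mathfrak c}\,x_{\mathbf b}$. The modified divided power is $\tilde\Gamma^dV=\mathrm{span}_R\{y_{\mathbf b}:\mathbf b\in\mathrm{Seq}(B,d)\}\subseteq\Gamma^dV$. For $w_1\in U^{\otimes c}$, $w_2\in U^{\otimes(d-c)}$ ($U$ any supermodule) the star product is $w_1*w_2=\sum_\sigma(w_1\otimes w_2)^\sigma$, summed over the shortest coset representatives $\sigma$ of $(\mathfrak S_c\times\mathfrak S_{d-c})\backslash\mathfrak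 S_d$; here $V,W\subseteq V\oplus W$ so that $\tilde\Gamma^{d_1}V\otimes\tilde\Gamma^{d_2}W\subseteq (V\oplus W)^{\otimes d_1}\otimes(V\oplus W)^{\otimes d_2}$. *)

theory Defs
  imports Main "HOL-Combinatorics.Permutations"
begin

(* Coordinates: a free R-module with finite basis B (a finite type 'b) is
   identified with functions B => R; the tensor power V^{\<otimes>d} with functions
   'b list => R supported on lists of length d (coefficient of b1 \<otimes> ... \<otimes> bd). *)

datatype kind = KA | KC | KOdd   (* basis element in B_a, B_c, or B_1 (odd) *)

definition pid :: "'r::comm_ring_1 itself \<Rightarrow> bool" where
  "pid _ \<longleftrightarrow> (\<forall>I::'r set. (0 \<in> I \<and> (\<forall>x\<in>I. \<forall>y\<in>I. x + y \<in> I) \<and> (\<forall>r. \<forall>x\<in>I. r * x \<in> I))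
      \<longrightarrow> (\<exists>a. I = {a * x | x. True}))"

definition strict_total :: "('b \<Rightarrow> 'b \<Rightarrow> bool) \<Rightarrow> bool" where
  "strict_total lt \<longleftrightarrow> (\<forall>x. \<not> lt x x) \<and> (\<forall>x y z. lt x y \<longrightarrow> lt y z \<longrightarrow> lt x z)
      \<and> (\<forall>x y. x \<noteq> y \<longrightarrow> lt x y \<or> lt y x)"

definition rspan :: "('a \<Rightarrow> 'r::comm_ring_1) set \<Rightarrow> ('a \<Rightarrow> 'r) set" where
  "rspan S = {v. \<exists>F c. finite F \<and> F \<subseteq> S \<and> v = (\<lambda>x. \<Sum>s\<in>F. c s * s x)}"

definition inv_odd :: "('b \<Rightarrow> kind) \<Rightarrow> ('b \<Rightarrow> 'b \<Rightarrow> bool) \<Rightarrow> 'b list \<Rightarrow> nat" where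
  "inv_odd kd lt bs = card {(k,l). k < l \<and> l < length bs \<and> kd (bs!k) = KOdd \<and> kd (bs!l) = KOdd
                              \<and> lt (bs!l) (bs!k)}"

definition Seq :: "('b \<Rightarrow> kind) \<Rightarrow> nat \<Rightarrow> 'b list set" where
  "Seq kd d = {bs. length bs = d \<and> (\<forall>k l. k < d \<longrightarrow> l < d \<longrightarrow> k \<noteq> l \<longrightarrow> bs!k = bs!l \<longrightarrow> kd (bs!k) \<noteq> KOdd)}"

definition permact :: "(nat \<Rightarrow> nat) \<Rightarrow> 'b list \<Rightarrow> 'b list" where
  "permact \<sigma> bs = map (\<lambda>i. bs ! (\<sigma> i)) [0..<length bs]"

definition orbit_rel :: "'b list \<Rightarrow> 'b list \<Rightarrow> bool" where
  "orbit_rel bs' bs \<longleftrightarrow> (\<exists>\<sigma>. \<sigma> permutes {..<length bs} \<and> bs' = permact \<sigma> bs)"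

definition xvec :: "('b \<Rightarrow> kind) \<Rightarrow> ('b \<Rightarrow> 'b \<Rightarrow> bool) \<Rightarrow> 'b list \<Rightarrow> ('b list \<Rightarrow> 'r::comm_ring_1)" where
  "xvec kd lt bs = (\<lambda>c. if orbit_rel c bs then (-1) ^ (inv_odd kd lt bs + inv_odd kd lt c) else 0)"

definition mult_in :: "'b list \<Rightarrow> 'b \<Rightarrow> nat" where
  "mult_in bs b = card {k. k < length bs \<and> bs!k = b}"

definition cfact :: "('b::finite \<Rightarrow> kind) \<Rightarrow> 'b list \<Rightarrow> nat" where
  "cfact kd bs = (\<Prod>b\<in>{b. kd b = KC}. fact (mult_in bs b))"

definition yvec :: "('b::finite \<Rightarrow> kind) \<Rightarrow> ('b \<Rightarrow> 'b \<Rightarrow> bool) \<Rightarrow> 'b list \<Rightarrow> ('b list \<Rightarrow> 'r::comm_ring_1)" where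
  "yvec kd lt bs = (\<lambda>c. of_nat (cfact kd bs) * xvec kd lt bs c)"

definition tGamma :: "('b::finite \<Rightarrow> kind) \<Rightarrow> ('b \<Rightarrow> 'b \<Rightarrow> bool) \<Rightarrow> nat \<Rightarrow> ('b list \<Rightarrow> 'r::comm_ring_1) set" where
  "tGamma kd lt d = rspan {yvec kd lt bs | bs. bs \<in> Seq kd d}"

definition sgn_exp :: "('b \<Rightarrow> kind) \<Rightarrow> (nat \<Rightarrow> nat) \<Rightarrow> 'b list \<Rightarrow> nat" where
  "sgn_exp kd \<sigma> bs = card {(k,l). k < l \<and> l < length bs \<and> inv \<sigma> k > inv \<sigma> l
                            \<and> kd (bs!k) = KOdd \<and> kd (bs!l) = KOdd}"

definition act :: "('b::finite \<Rightarrow> kind) \<Rightarrow> nat \<Rightarrow> (nat \<Rightarrow> nat) \<Rightarrow> ('b list \<Rightarrow> 'r::comm_ring_1) \<Rightarrow> ('b list \<Rightarrow> 'r)" where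
  "act kd d \<sigma> t = (\<lambda>c. \<Sum>bs\<in>{bs. length bs = d}.
       if c = permact \<sigma> bs then (-1) ^ sgn_exp kd \<sigma> bs * t bs else 0)"

definition ninv :: "nat \<Rightarrow> (nat \<Rightarrow> nat) \<Rightarrow> nat" where
  "ninv d \<sigma> = card {(i,j). i < j \<and> j < d \<and> \<sigma> i > \<sigma> j}"

(* shortest representatives of the right cosets (S_c x S_{d-c}) sigma in S_d *)
definition minreps :: "nat \<Rightarrow> nat \<Rightarrow> (nat \<Rightarrow> nat) set" where
  "minreps c d = {\<sigma>. \<sigma> permutes {..<d} \<and>
      (\<forall>\<tau>. \<tau> permutes {..<d} \<and> \<tau> ` {..<c} = {..<c} \<longrightarrow> ninv d \<sigma> \<le> ninv d (\<tau> \<circ> \<sigma>))}"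

(* star product, extended linearly: w in U^{\<otimes>c} \<otimes> U^{\<otimes>(d-c)} = U^{\<otimes>d} *)
definition star :: "('b::finite \<Rightarrow> kind) \<Rightarrow> nat \<Rightarrow> nat \<Rightarrow> ('b list \<Rightarrow> 'r::comm_ring_1) \<Rightarrow> ('b list \<Rightarrow> 'r)" where
  "star kd c d w = (\<lambda>x. \<Sum>\<sigma>\<in>minreps c d. act kd d \<sigma> w x)"

definition sumkind :: "('v \<Rightarrow> kind) \<Rightarrow> ('w \<Rightarrow> kind) \<Rightarrow> ('v + 'w) \<Rightarrow> kind" where
  "sumkind kV kW = case_sum kV kW"

(* y \<otimes> y' for y in V^{\<otimes>d1}, y' in W^{\<otimes>d2}, as an element of (V\<oplus>W)^{\<otimes>(d1+d2)} *)
definition ptensor :: "nat \<Rightarrow> ('v list \<Rightarrow> 'r::comm_ring_1) \<Rightarrow> ('w list \<Rightarrow> 'r) \<Rightarrow> (('v + 'w) list \<Rightarrow> 'r)" where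
  "ptensor d1 y y' bs = (if (\<forall>x\<in>set (take d1 bs). isl x) \<and> (\<forall>x\<in>set (drop d1 bs). \<not> isl x)
       then y (map projl (take d1 bs)) * y' (map projr (drop d1 bs)) else 0)"

(* (\<Gamma>~^{d1} V) \<otimes> (\<Gamma>~^{d2} W) as a submodule of (V\<oplus>W)^{\<otimes>(d1+d2)} *)
definition tens_sub :: "('v::finite \<Rightarrow> kind) \<Rightarrow> ('v \<Rightarrow> 'v \<Rightarrow> bool) \<Rightarrow> ('w::finite \<Rightarrow> kind) \<Rightarrow> ('w \<Rightarrow> 'w \<Rightarrow> bool)
      \<Rightarrow> nat \<Rightarrow> nat \<Rightarrow> (('v + 'w) list \<Rightarrow> 'r::comm_ring_1) set" where
  "tens_sub kV ltV kW ltW d1 d2 = rspan {ptensor d1 y y' | y y'. y \<in> tGamma kV ltV d1 \<and> y' \<in> tGamma kW ltW d2}"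

(* external direct sum over d1 + d2 = d, indexed by d1 \<in> {0..d} *)
definition dsum_dom :: "('v::finite \<Rightarrow> kind) \<Rightarrow> ('v \<Rightarrow> 'v \<Rightarrow> bool) \<Rightarrow> ('w::finite \<Rightarrow> kind) \<Rightarrow> ('w \<Rightarrow> 'w \<Rightarrow> bool)
      \<Rightarrow> nat \<Rightarrow> (nat \<Rightarrow> ('v + 'w) list \<Rightarrow> 'r::comm_ring_1) set" where
  "dsum_dom kV ltV kW ltW d = {m. (\<forall>k\<le>d. m k \<in> tens_sub kV ltV kW ltW k (d - k)) \<and> (\<forall>k>d. m k = (\<lambda>_. 0))}"

definition Phi :: "('v::finite \<Rightarrow> kind) \<Rightarrow> ('w::finite \<Rightarrow> kind) \<Rightarrow> nat
      \<Rightarrow> (nat \<Rightarrow> ('v + 'w) list \<Rightarrow> 'r::comm_ring_1) \<Rightarrow> (('v + 'w) list \<Rightarrow> 'r)" where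
  "Phi kV kW d m = (\<lambda>x. \<Sum>k\<le>d. star (sumkind kV kW) k d (m k) x)"

definition homog :: "('b \<Rightarrow> kind) \<Rightarrow> bool \<Rightarrow> ('b list \<Rightarrow> 'r::zero) \<Rightarrow> bool" where
  "homog kd p t \<longleftrightarrow> (\<forall>bs. t bs \<noteq> 0 \<longrightarrow> odd (length (filter (\<lambda>b. kd b = KOdd) bs)) = p)"

end

theory Submission
  imports Defs "HOL-Library.Multiset" "HOL-Library.Function_Algebras" HOL.Modules
begin

text \<open>
  For words \<open>b\<^sub>V\<close> of length \<open>k\<close>
  and \<open>b\<^sub>W\<close> of length \<open>d - k\<close>, the tensor \<open>y\<^sub>b\<^sub>V \<otimes> y\<^sub>b\<^sub>W\<close> is the restriction of the symmetric
  tensor \<open>y\<^sub>b\<close>, \<open>b = b\<^sub>V b\<^sub>W\<close>, to the words whose first \<open>k\<close> letters lie in \<open>V\<close>, and its star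
  product gives back \<open>y\<^sub>b\<close>: at a word \<open>c\<close> only one shortest coset representative contributes,
  the shuffle moving the \<open>V\<close>-letters of \<open>c\<close> to the front. This is because a shortest
  representative has no inversions beyond those forced by its coset, and a permutation is
  determined by its inversions. The signs match since \<open>(-1)^(\<langle>b\<rangle> + \<langle>b'\<rangle>)\<close> is the Koszul sign of
  any permutation taking \<open>b\<close> to \<open>b'\<close>, whichever total order is used; so sorting \<open>b\<close> into its
  \<open>V\<close>-letters followed by its \<open>W\<close>-letters changes \<open>y\<^sub>b\<close> only by a sign, and the submodule
  \<open>\<Phi>(\<dots>)\<close> contains every generator \<open>y\<^sub>b\<close> of \<open>\<Gamma>~\<^sup>d(V \<oplus> W)\<close>. Injectivity: at a word whose first
  \<open>d\<^sub>1\<close> letters lie in \<open>V\<close> and the others in \<open>W\<close>, \<open>\<Phi> m\<close> agrees with the component \<open>m\<^sub>d\<^sub>1\<close>,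
  which vanishes at all other words.
\<close>

lemma permact_eq_permute_list: "permact = permute_list"
  by (auto simp: permact_def permute_list_def fun_eq_iff)

lemma orbit_rel_iff_mset_eq: "orbit_rel c b \<longleftrightarrow> mset c = mset b"
  by (metis orbit_rel_def permact_eq_permute_list mset_permute_list mset_eq_permutation)

lemma permute_list_inv_cancel:
  assumes "\<sigma> permutes {..<length c}"
  shows "permute_list \<sigma> (permute_list (inv \<sigma>) c) = c"
  by (simp add: assms permute_list_compose[symmetric] permutes_inv_o(2)[OF assms])

lemma permute_list_cancel_inv:
  assumes "\<sigma> permutes {..<length c}"
  shows "permute_list (inv \<sigma>) (permute_list \<sigma> c) = c"
  using permute_list_compose[where g="inv \<sigma>" and f=\<sigma> and xs=c] permutes_inv[OF assms]
  by (simp add: permutes_inv_o(1)[OF assms])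

lemma finite_lists_length: "finite {xs :: 'b::finite list. length xs = d}"
  using finite_lists_length_eq[of "UNIV :: 'b set" d] by simp

lemma act_apply:
  fixes kd :: "'b::finite \<Rightarrow> kind"
  assumes "\<sigma> permutes {..<d}"
  shows "act kd d \<sigma> f c = (if length c = d then
     (-1) ^ sgn_exp kd \<sigma> (permute_list (inv \<sigma>) c) * f (permute_list (inv \<sigma>) c) else 0)"
proof (cases "length c = d")
  case True
  have "c = permute_list \<sigma> bs \<longleftrightarrow> bs = permute_list (inv \<sigma>) c" if "length bs = d" for bs
    using True that assms permute_list_inv_cancel[of \<sigma> c] permute_list_cancel_inv[of \<sigma> bs] by auto
  then show ?thesis
    using True by (simp add: act_def permact_eq_permute_list finite_lists_length if_distrib cong: if_cong)
qed (auto simp: act_def permact_eq_permute_list intro!: sum.neutral)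

lemma card_pairs_permutes:
  fixes \<tau> :: "nat \<Rightarrow> nat"
  assumes \<tau>: "\<tau> permutes {..<n}"
  shows "card {(i, j). i < j \<and> j < n \<and> R (\<tau> i) (\<tau> j)}
    = card {(k, l). k < l \<and> l < n \<and> (if inv \<tau> k < inv \<tau> l then R k l else R l k)}"
    (is "card ?L = card ?R")
proof -
  let ?sort = "\<lambda>(i::nat, j). (min i j, max i j)"
  have \<tau>': "inv \<tau> permutes {..<n}"
    using \<tau> by (rule permutes_inv)
  have lt_n: "i < n \<Longrightarrow> \<tau> i < n" "i < n \<Longrightarrow> inv \<tau> i < n" for i
    using permutes_in_image[OF \<tau>] permutes_in_image[OF \<tau>'] by auto
  have inv_eq: "inv \<tau> (\<tau> i) = i" "\<tau> (inv \<tau> i) = i" "inv \<tau> i = inv \<tau> j \<longleftrightarrow> i = j"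
    "\<tau> i = \<tau> j \<longleftrightarrow> i = j" for i j
    using permutes_inverses[OF \<tau>] permutes_inj[OF \<tau>] permutes_inj[OF \<tau>'] by (auto dest: injD)
  have "bij_betw (?sort \<circ> map_prod \<tau> \<tau>) ?L ?R"
  proof (rule bij_betwI[where g = "?sort \<circ> map_prod (inv \<tau>) (inv \<tau>)"])
    show "?sort \<circ> map_prod \<tau> \<tau> \<in> ?L \<rightarrow> ?R"
    proof
      fix p assume "p \<in> ?L"
      then obtain i j where "p = (i, j)" "i < j" "j < n" "R (\<tau> i) (\<tau> j)" by auto
      then show "(?sort \<circ> map_prod \<tau> \<tau>) p \<in> ?R"
        by (cases "\<tau> i" "\<tau> j" rule: linorder_cases) (auto simp: lt_n inv_eq)
    qed
    show "?sort \<circ> map_prod (inv \<tau>) (inv \<tau>) \<in> ?R \<rightarrow> ?L"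
    proof
      fix p assume "p \<in> ?R"
      then obtain k l where "p = (k, l)" "k < l" "l < n" "if inv \<tau> k < inv \<tau> l then R k l else R l k" by auto
      then show "(?sort \<circ> map_prod (inv \<tau>) (inv \<tau>)) p \<in> ?L"
        by (cases "inv \<tau> k" "inv \<tau> l" rule: linorder_cases) (auto simp: lt_n inv_eq)
    qed
  qed (auto simp: inv_eq min_def max_def)
  then show ?thesis
    by (rule bij_betw_same_card)
qed

section \<open>Koszul signs and the generators \<open>y\<^sub>b\<close>\<close>

definition odd_distinct :: "('b \<Rightarrow> kind) \<Rightarrow> 'b list \<Rightarrow> bool" where
  "odd_distinct kd xs \<longleftrightarrow> (\<forall>x. kd x = KOdd \<longrightarrow> count (mset xs) x \<le> 1)"

lemma odd_distinct_iff_nth: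
  "odd_distinct kd xs \<longleftrightarrow> (\<forall>k l. k < length xs \<longrightarrow> l < length xs \<longrightarrow> k \<noteq> l \<longrightarrow> xs!k = xs!l \<longrightarrow> kd (xs!k) \<noteq> KOdd)"
proof -
  have "count (mset xs) x = card {i. i < length xs \<and> xs!i = x}" for x
    by (simp add: count_mset count_list_eq_length_filter length_filter_conv_card eq_commute)
  then show ?thesis
    unfolding odd_distinct_def by (auto simp: card_le_Suc0_iff_eq)
qed

lemma Seq_eq_odd_distinct: "Seq kd d = {xs. length xs = d \<and> odd_distinct kd xs}"
  by (auto simp: Seq_def odd_distinct_iff_nth)

lemma odd_distinct_nth_neq:
  "\<lbrakk>odd_distinct kd xs; k < length xs; l < length xs; k \<noteq> l; kd (xs!k) = KOdd\<rbrakk> \<Longrightarrow> xs!k \<noteq> xs!l"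
  by (auto simp: odd_distinct_iff_nth)

lemma neg_one_power_card_neq:
  assumes "finite P"
  shows "(-1::'a::comm_ring_1) ^ card {p\<in>P. A p \<noteq> B p} = (-1) ^ card {p\<in>P. A p} * (-1) ^ card {p\<in>P. B p}"
proof -
  have card_eq_sum: "card {p\<in>P. Q p} = (\<Sum>p\<in>P. of_bool (Q p))" for Q
    using assms by (simp add: Int_def conj_commute)
  have "card {p\<in>P. A p} + card {p\<in>P. B p} = card {p\<in>P. A p \<noteq> B p} + 2 * card {p\<in>P. A p \<and> B p}"
    unfolding card_eq_sum sum.distrib[symmetric] sum_distrib_left by (intro sum.cong) auto
  then have "(-1::'a) ^ card {p\<in>P. A p \<noteq> B p} = (-1) ^ (card {p\<in>P. A p} + card {p\<in>P. B p})"
    by (simp add: power_add power_mult)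
  then show ?thesis
    by (simp only: power_add)
qed

lemma strict_total_asym: "strict_total lt \<Longrightarrow> lt x y \<Longrightarrow> \<not> lt y x"
  unfolding strict_total_def by blast

lemma strict_total_total: "strict_total lt \<Longrightarrow> x \<noteq> y \<Longrightarrow> lt x y \<or> lt y x"
  unfolding strict_total_def by blast

lemma inv_odd_permute_list:
  assumes lt: "strict_total lt" and \<sigma>: "\<sigma> permutes {..<length bs}" and dist: "odd_distinct kd bs"
  shows "inv_odd kd lt (permute_list \<sigma> bs) = card {(k, l). k < l \<and> l < length bs
    \<and> kd (bs!k) = KOdd \<and> kd (bs!l) = KOdd \<and> lt (bs!l) (bs!k) \<noteq> (inv \<sigma> l < inv \<sigma> k)}"
proof -
  define R where "R a b \<longleftrightarrow> kd (bs!a) = KOdd \<and> kd (bs!b) = KOdd \<and> lt (bs!b) (bs!a)" for a b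
  have R_sorted: "(k < l \<and> l < length bs \<and> (if inv \<sigma> k < inv \<sigma> l then R k l else R l k)) \<longleftrightarrow>
      (k < l \<and> l < length bs \<and> kd (bs!k) = KOdd \<and> kd (bs!l) = KOdd \<and> lt (bs!l) (bs!k) \<noteq> (inv \<sigma> l < inv \<sigma> k))"
    for k l
  proof (cases "k < l \<and> l < length bs \<and> \<not> inv \<sigma> k < inv \<sigma> l")
    case True
    have "inv \<sigma> k \<noteq> inv \<sigma> l"
      using True permutes_inj[OF permutes_inv[OF \<sigma>]] by (auto dest: injD)
    with True have "inv \<sigma> l < inv \<sigma> k"
      by simp
    moreover have "kd (bs!k) = KOdd \<Longrightarrow> bs!k \<noteq> bs!l"
      using odd_distinct_nth_neq[OF dist, of k l] True by simp
    ultimately show ?thesis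
      using True strict_total_total[OF lt] strict_total_asym[OF lt] by (auto simp: R_def)
  qed (auto simp: R_def)
  have "inv_odd kd lt (permute_list \<sigma> bs) = card {(i, j). i < j \<and> j < length bs \<and> R (\<sigma> i) (\<sigma> j)}"
    unfolding inv_odd_def R_def by (rule arg_cong[where f = card]) (auto simp: permute_list_nth[OF \<sigma>])
  also have "\<dots> = card {(k, l). k < l \<and> l < length bs \<and> (if inv \<sigma> k < inv \<sigma> l then R k l else R l k)}"
    by (rule card_pairs_permutes[OF \<sigma>])
  also have "\<dots> = card {(k, l). k < l \<and> l < length bs
    \<and> kd (bs!k) = KOdd \<and> kd (bs!l) = KOdd \<and> lt (bs!l) (bs!k) \<noteq> (inv \<sigma> l < inv \<sigma> k)}"
    by (simp only: R_sorted)
  finally show ?thesis .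
qed

lemma neg_one_power_sgn_exp:
  assumes "strict_total lt" "\<sigma> permutes {..<length bs}" "odd_distinct kd bs"
  shows "(-1::'r::comm_ring_1) ^ sgn_exp kd \<sigma> bs = (-1) ^ (inv_odd kd lt bs + inv_odd kd lt (permute_list \<sigma> bs))"
proof -
  define P where "P = {(k, l). k < l \<and> l < length bs \<and> kd (bs!k) = KOdd \<and> kd (bs!l) = KOdd}"
  define A where "A = (\<lambda>(k, l). lt (bs!l) (bs!k))"
  define B where "B = (\<lambda>(k, l). inv \<sigma> l < inv \<sigma> k)"
  have "finite P"
    by (rule finite_subset[of _ "{..<length bs} \<times> {..<length bs}"]) (auto simp: P_def)
  have inv_odd_bs: "inv_odd kd lt bs = card {p\<in>P. A p}"
    unfolding inv_odd_def P_def A_def by (rule arg_cong[where f = card]) auto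
  have sgn_exp_bs: "sgn_exp kd \<sigma> bs = card {p\<in>P. B p}"
    unfolding sgn_exp_def P_def B_def by (rule arg_cong[where f = card]) auto
  have inv_odd_permuted: "inv_odd kd lt (permute_list \<sigma> bs) = card {p\<in>P. A p \<noteq> B p}"
    unfolding inv_odd_permute_list[OF assms] P_def A_def B_def by (rule arg_cong[where f = card]) auto
  show ?thesis
    unfolding inv_odd_bs sgn_exp_bs inv_odd_permuted power_add neg_one_power_card_neq[OF \<open>finite P\<close>]
    by simp
qed

lemma cfact_eq_prod_count: "cfact kd bs = (\<Prod>b\<in>{b. kd b = KC}. fact (count (mset bs) b))"
  by (simp add: cfact_def mult_in_def count_mset count_list_eq_length_filter length_filter_conv_card eq_commute)

lemma yvec_apply:
  "yvec kd lt bs c = (if mset c = mset bs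
     then of_nat (cfact kd bs) * (-1) ^ (inv_odd kd lt bs + inv_odd kd lt c) else 0)"
  by (simp add: yvec_def xvec_def orbit_rel_iff_mset_eq)

lemma yvec_mset_eq:
  assumes "mset B = mset B'"
  shows "yvec kd lt B = (\<lambda>c. (-1) ^ (inv_odd kd lt B + inv_odd kd lt B') * yvec kd lt B' c)"
  using assms by (auto simp: fun_eq_iff yvec_apply cfact_eq_prod_count power_add mult_ac)

lemma neg_one_power_inv_odd_indep_order:
  assumes "odd_distinct kd xs" "mset xs' = mset xs" "strict_total lt1" "strict_total lt2"
  shows "(-1::'r::comm_ring_1) ^ (inv_odd kd lt1 xs + inv_odd kd lt1 xs')
       = (-1) ^ (inv_odd kd lt2 xs + inv_odd kd lt2 xs')"
proof -
  obtain \<sigma> where "\<sigma> permutes {..<length xs}" "xs' = permute_list \<sigma> xs"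
    using mset_eq_permutation[OF assms(2)] by metis
  then show ?thesis
    using neg_one_power_sgn_exp[OF assms(3)] neg_one_power_sgn_exp[OF assms(4)] assms(1) by metis
qed

lemma yvec_permute_list:
  assumes lt: "strict_total lt" and B: "odd_distinct kd B" and \<sigma>: "\<sigma> permutes {..<length c}"
  shows "(-1) ^ sgn_exp kd \<sigma> c * yvec kd lt B c = (yvec kd lt B (permute_list \<sigma> c) :: 'r::comm_ring_1)"
proof (cases "mset c = mset B")
  case True
  then have "odd_distinct kd c"
    using B by (simp add: odd_distinct_def)
  then have "(-1::'r) ^ sgn_exp kd \<sigma> c = (-1) ^ (inv_odd kd lt c + inv_odd kd lt (permute_list \<sigma> c))"
    using neg_one_power_sgn_exp[OF lt \<sigma>] by blast
  then show ?thesis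
    using True \<sigma> by (simp add: yvec_apply power_add mult_ac)
qed (use \<sigma> in \<open>simp add: yvec_apply\<close>)

lemma inv_odd_map: "inv_odd kd lt (map f xs) = inv_odd (kd \<circ> f) (\<lambda>x y. lt (f x) (f y)) xs"
  unfolding inv_odd_def by (rule arg_cong[where f = card]) auto

definition odd_inversions :: "('b \<Rightarrow> kind) \<Rightarrow> ('b \<Rightarrow> 'b \<Rightarrow> bool) \<Rightarrow> 'b list \<Rightarrow> (nat \<times> nat) set" where
  "odd_inversions kd lt zs = {(k, l). k < l \<and> l < length zs
     \<and> kd (zs!k) = KOdd \<and> kd (zs!l) = KOdd \<and> lt (zs!l) (zs!k)}"

definition cross_inversions :: "('b \<Rightarrow> kind) \<Rightarrow> ('b \<Rightarrow> 'b \<Rightarrow> bool) \<Rightarrow> 'b list \<Rightarrow> 'b list \<Rightarrow> (nat \<times> nat) set" where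
  "cross_inversions kd lt xs ys = {(i, j). i < length xs \<and> j < length ys
     \<and> kd (xs!i) = KOdd \<and> kd (ys!j) = KOdd \<and> lt (ys!j) (xs!i)}"

lemma odd_inversions_append:
  "odd_inversions kd lt (xs @ ys) = odd_inversions kd lt xs
     \<union> map_prod ((+) (length xs)) ((+) (length xs)) ` odd_inversions kd lt ys
     \<union> map_prod id ((+) (length xs)) ` cross_inversions kd lt xs ys" (is "?I = ?I1 \<union> ?I2 \<union> ?C")
proof (intro equalityI subsetI)
  let ?n = "length xs"
  fix p assume "p \<in> ?I"
  then obtain k l where [simp]: "p = (k, l)" and kl: "(k, l) \<in> ?I" by (cases p) auto
  consider "l < ?n" | "?n \<le> k" | "k < ?n" "?n \<le> l" by linarith
  then show "p \<in> ?I1 \<union> ?I2 \<union> ?C"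
  proof cases
    case 1
    then show ?thesis using kl by (auto simp: odd_inversions_def nth_append)
  next
    case 2
    then have "(k - ?n, l - ?n) \<in> odd_inversions kd lt ys"
      using kl by (auto simp: odd_inversions_def nth_append)
    then have "p \<in> ?I2"
      using 2 kl by (intro rev_image_eqI[of "(k - ?n, l - ?n)"]) (auto simp: odd_inversions_def)
    then show ?thesis by blast
  next
    case 3
    then have "(k, l - ?n) \<in> cross_inversions kd lt xs ys"
      using kl by (auto simp: odd_inversions_def cross_inversions_def nth_append)
    then have "p \<in> ?C"
      using 3 by (intro rev_image_eqI[of "(k, l - ?n)"]) auto
    then show ?thesis by blast
  qed
next
  have "?I1 \<subseteq> ?I" "?I2 \<subseteq> ?I" "?C \<subseteq> ?I"
    by (auto simp: odd_inversions_def cross_inversions_def nth_append)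
  then show "p \<in> ?I" if "p \<in> ?I1 \<union> ?I2 \<union> ?C" for p
    using that by blast
qed

lemma inv_odd_append:
  "inv_odd kd lt (xs @ ys) = inv_odd kd lt xs + inv_odd kd lt ys + card (cross_inversions kd lt xs ys)"
proof -
  let ?n = "length xs"
  have fin: "finite (odd_inversions kd lt zs)" for zs
    by (rule finite_subset[of _ "{..<length zs} \<times> {..<length zs}"]) (auto simp: odd_inversions_def)
  have "finite (cross_inversions kd lt xs ys)"
    by (rule finite_subset[of _ "{..<?n} \<times> {..<length ys}"]) (auto simp: cross_inversions_def)
  moreover have "card (map_prod ((+) ?n) ((+) ?n) ` odd_inversions kd lt ys) = card (odd_inversions kd lt ys)"
    "card (map_prod id ((+) ?n) ` cross_inversions kd lt xs ys) = card (cross_inversions kd lt xs ys)"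
    by (auto intro!: card_image simp: inj_on_def)
  moreover have "odd_inversions kd lt xs \<inter> map_prod ((+) ?n) ((+) ?n) ` odd_inversions kd lt ys = {}"
    "(odd_inversions kd lt xs \<union> map_prod ((+) ?n) ((+) ?n) ` odd_inversions kd lt ys)
       \<inter> map_prod id ((+) ?n) ` cross_inversions kd lt xs ys = {}"
    by (auto simp: odd_inversions_def cross_inversions_def)
  ultimately show ?thesis
    unfolding inv_odd_def odd_inversions_def[symmetric] odd_inversions_append using fin
    by (simp add: card_Un_disjoint)
qed

lemma card_cross_inversions_mset_eq:
  assumes "mset xs' = mset xs" "mset ys' = mset ys"
  shows "card (cross_inversions kd lt xs' ys') = card (cross_inversions kd lt xs ys)"
proof -
  have "card (cross_inversions kd lt xs ys) = (\<Sum>x\<leftarrow>xs. length (filter (\<lambda>y. kd x = KOdd \<and> kd y = KOdd \<and> lt y x) ys))"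
    for xs ys :: "'a list"
  proof -
    have "cross_inversions kd lt xs ys
        = (SIGMA i:{..<length xs}. {j. j < length ys \<and> kd (xs!i) = KOdd \<and> kd (ys!j) = KOdd \<and> lt (ys!j) (xs!i)})"
      by (auto simp: cross_inversions_def)
    then show ?thesis
      by (simp add: card_SigmaI length_filter_conv_card sum_list_sum_nth atLeast0LessThan)
  qed
  moreover have "length (filter P ys') = length (filter P ys)" for P
    using assms(2) by (metis mset_filter size_mset)
  moreover have "(\<Sum>x\<leftarrow>xs'. g x) = (\<Sum>x\<leftarrow>xs. g x)" for g :: "'a \<Rightarrow> nat"
    using assms(1) by (metis mset_map sum_mset_sum_list)
  ultimately show ?thesis
    by presburger
qed

lemma sumkind_simps [simp]: "sumkind kV kW (Inl x) = kV x" "sumkind kV kW (Inr y) = kW y"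
  by (simp_all add: sumkind_def)

lemma count_image_mset_Inl [simp]:
  "count (image_mset Inl A) (Inl x) = count A x" "count (image_mset Inl A) (Inr y) = 0"
  by (induction A; simp)+

lemma count_image_mset_Inr [simp]:
  "count (image_mset Inr B) (Inr y) = count B y" "count (image_mset Inr B) (Inl x) = 0"
  by (induction B; simp)+

lemma image_mset_Inl_Inr_eq_iff:
  "image_mset Inl A + image_mset Inr B = image_mset Inl A' + image_mset Inr B' \<longleftrightarrow> A = A' \<and> B = B'"
  by (metis count_image_mset_Inl count_image_mset_Inr count_union add_0 add.right_neutral multiset_eqI)

lemma odd_distinct_append_Inl_Inr:
  "odd_distinct (sumkind kV kW) (map Inl a @ map Inr b) \<longleftrightarrow> odd_distinct kV a \<and> odd_distinct kW b"
  unfolding odd_distinct_def by (auto simp: sumkind_def split: sum.split)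

lemma cfact_append_Inl_Inr:
  "cfact (sumkind kV kW) (map Inl a @ map Inr b) = cfact kV a * cfact kW b"
proof -
  have "x \<in> {x. sumkind kV kW x = KC} \<longleftrightarrow> x \<in> Inl ` {v. kV v = KC} \<union> Inr ` {w. kW w = KC}" for x
    by (cases x) auto
  then have KC_eq: "{x. sumkind kV kW x = KC} = Inl ` {v. kV v = KC} \<union> Inr ` {w. kW w = KC}"
    by blast
  show ?thesis
    unfolding cfact_eq_prod_count KC_eq by (subst prod.union_disjoint) (auto simp: prod.reindex)
qed

lemma yvec_append_Inl_Inr:
  fixes kV :: "'v::finite \<Rightarrow> kind" and kW :: "'w::finite \<Rightarrow> kind"
  assumes stV: "strict_total ltV" and stW: "strict_total ltW" and stS: "strict_total ltS"
    and dV: "odd_distinct kV bV" and dW: "odd_distinct kW bW"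
  shows "yvec kV ltV bV cV * yvec kW ltW bW cW =
     (yvec (sumkind kV kW) ltS (map Inl bV @ map Inr bW) (map Inl cV @ map Inr cW) :: 'r::comm_ring_1)"
proof (cases "mset cV = mset bV \<and> mset cW = mset bW")
  case True
  let ?ltV = "\<lambda>x y. ltS (Inl x) (Inl y)" and ?ltW = "\<lambda>x y. ltS (Inr x) (Inr y)"
  have "strict_total ?ltV" "strict_total ?ltW"
    using stS unfolding strict_total_def by blast+
  then have signV: "(-1::'r) ^ (inv_odd kV ?ltV bV + inv_odd kV ?ltV cV) = (-1) ^ (inv_odd kV ltV bV + inv_odd kV ltV cV)"
    and signW: "(-1::'r) ^ (inv_odd kW ?ltW bW + inv_odd kW ?ltW cW) = (-1) ^ (inv_odd kW ltW bW + inv_odd kW ltW cW)"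
    using neg_one_power_inv_odd_indep_order dV dW stV stW True by blast+
  have "card (cross_inversions (sumkind kV kW) ltS (map Inl cV) (map Inr cW))
      = card (cross_inversions (sumkind kV kW) ltS (map Inl bV) (map Inr bW))"
    using True by (intro card_cross_inversions_mset_eq) simp_all
  then have "(-1::'r) ^ (inv_odd (sumkind kV kW) ltS (map Inl bV @ map Inr bW) + inv_odd (sumkind kV kW) ltS (map Inl cV @ map Inr cW))
     = (-1) ^ (inv_odd kV ?ltV bV + inv_odd kV ?ltV cV) * (-1) ^ (inv_odd kW ?ltW bW + inv_odd kW ?ltW cW)"
    by (simp add: inv_odd_append inv_odd_map comp_def power_add mult_ac)
  then show ?thesis
    using True by (simp add: yvec_apply cfact_append_Inl_Inr signV signW mult_ac)
next
  case False
  then have "mset (map Inl cV @ map Inr cW) \<noteq> mset (map Inl bV @ map Inr bW)"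
    by (simp add: image_mset_Inl_Inr_eq_iff)
  then show ?thesis
    using False unfolding yvec_apply by auto
qed

section \<open>Shortest coset representatives\<close>

definition inversions :: "nat \<Rightarrow> (nat \<Rightarrow> nat) \<Rightarrow> (nat \<times> nat) set" where
  "inversions d \<sigma> = {(i, j). i < j \<and> j < d \<and> \<sigma> j < \<sigma> i}"

lemma ninv_eq_card_inversions: "ninv d \<sigma> = card (inversions d \<sigma>)"
  by (simp add: ninv_def inversions_def)

lemma finite_inversions: "finite (inversions d \<sigma>)"
  by (rule finite_subset[of _ "{..<d} \<times> {..<d}"]) (auto simp: inversions_def)

lemma card_less_image_permutes:
  assumes \<sigma>: "\<sigma> permutes {..<d}" and "x < d"
  shows "card {y. y < d \<and> \<sigma> y < \<sigma> x} = \<sigma> x"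
proof -
  have "\<sigma> x < d"
    using assms permutes_in_image by fastforce
  have "{y. y < d \<and> \<sigma> y < \<sigma> x} = inv \<sigma> ` {..<\<sigma> x}"
  proof (intro equalityI subsetI)
    fix y assume "y \<in> {y. y < d \<and> \<sigma> y < \<sigma> x}"
    then show "y \<in> inv \<sigma> ` {..<\<sigma> x}"
      by (intro rev_image_eqI[of "\<sigma> y"]) (auto simp: permutes_inverses[OF \<sigma>])
  next
    fix y assume "y \<in> inv \<sigma> ` {..<\<sigma> x}"
    then obtain z where "z < \<sigma> x" "y = inv \<sigma> z" by auto
    then show "y \<in> {y. y < d \<and> \<sigma> y < \<sigma> x}"
      using \<open>\<sigma> x < d\<close> permutes_in_image[OF permutes_inv[OF \<sigma>]] by (auto simp: permutes_inverses[OF \<sigma>])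
  qed
  then show ?thesis
    using permutes_inj_on[OF permutes_inv[OF \<sigma>]] by (simp add: card_image)
qed

text \<open>\<open>\<sigma> x\<close> is the number of \<open>y < d\<close> with \<open>\<sigma> y < \<sigma> x\<close>, and the inversions of \<open>\<sigma>\<close> tell which \<open>y\<close> these are.\<close>
lemma permutes_eq_if_inversions_eq:
  assumes \<sigma>: "\<sigma> permutes {..<d}" and \<tau>: "\<tau> permutes {..<d}" and eq: "inversions d \<sigma> = inversions d \<tau>"
  shows "\<sigma> = \<tau>"
proof
  fix x
  have less_iff: "\<rho> y < \<rho> x \<longleftrightarrow> (y < x \<and> (y, x) \<notin> inversions d \<rho>) \<or> (x < y \<and> (x, y) \<in> inversions d \<rho>)"
    if "\<rho> permutes {..<d}" "x < d" "y < d" for \<rho> y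
    using that injD[OF permutes_inj[OF that(1)], of x y]
    by (cases x y rule: linorder_cases) (auto simp: inversions_def, meson linorder_neqE_nat)
  show "\<sigma> x = \<tau> x"
  proof (cases "x < d")
    case True
    then have "{y. y < d \<and> \<sigma> y < \<sigma> x} = {y. y < d \<and> \<tau> y < \<tau> x}"
      using less_iff[OF \<sigma>] less_iff[OF \<tau>] eq by auto
    then show ?thesis
      using card_less_image_permutes[OF \<sigma> True] card_less_image_permutes[OF \<tau> True] by simp
  next
    case False
    then show ?thesis
      using \<sigma> \<tau> by (simp add: permutes_not_in)
  qed
qed

definition moves_to_front :: "nat set \<Rightarrow> nat \<Rightarrow> nat \<Rightarrow> (nat \<Rightarrow> nat) \<Rightarrow> bool" where
  "moves_to_front S k d \<sigma> \<longleftrightarrow> (\<forall>i<d. \<sigma> i < k \<longleftrightarrow> i \<in> S)"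

definition forced_inversions :: "nat set \<Rightarrow> nat \<Rightarrow> (nat \<times> nat) set" where
  "forced_inversions S d = {(i, j). i < j \<and> j < d \<and> i \<notin> S \<and> j \<in> S}"

lemma forced_inversions_subset:
  "moves_to_front S k d \<sigma> \<Longrightarrow> forced_inversions S d \<subseteq> inversions d \<sigma>"
  unfolding moves_to_front_def forced_inversions_def inversions_def
  by clarify (metis less_trans not_le order.strict_trans2)

lemma card_moves_to_front:
  assumes \<sigma>: "\<sigma> permutes {..<d}" and front: "moves_to_front S k d \<sigma>" and "S \<subseteq> {..<d}" "k \<le> d"
  shows "card S = k"
proof -
  have "S = inv \<sigma> ` {..<k}"
  proof (intro equalityI subsetI)
    fix x assume "x \<in> S"
    then show "x \<in> inv \<sigma> ` {..<k}"
      using assms by (intro rev_image_eqI[of "\<sigma> x"]) (auto simp: moves_to_front_def permutes_inverses[OF \<sigma>])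
  next
    fix x assume "x \<in> inv \<sigma> ` {..<k}"
    then obtain y where "y < k" "x = inv \<sigma> y" by auto
    then show "x \<in> S"
      using front[unfolded moves_to_front_def, rule_format, of "inv \<sigma> y"] \<open>k \<le> d\<close>
        permutes_in_image[OF permutes_inv[OF \<sigma>]] permutes_inverses[OF \<sigma>] by simp
  qed
  then show ?thesis
    using permutes_inj_on[OF permutes_inv[OF \<sigma>]] by (simp add: card_image)
qed

definition shuffle_perm :: "nat set \<Rightarrow> nat \<Rightarrow> nat \<Rightarrow> nat" where
  "shuffle_perm S d x = (if x \<in> S then card {s\<in>S. s < x}
     else if x < d then card S + card {s\<in>{..<d} - S. s < x} else x)"

lemma card_less_strict_mono: "finite A \<Longrightarrow> x \<in> A \<Longrightarrow> x < (y::nat) \<Longrightarrow> card {a\<in>A. a < x} < card {a\<in>A. a < y}"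
  by (rule psubset_card_mono) (simp, rule psubsetI, auto)

lemma card_less_less_card: "finite A \<Longrightarrow> x \<in> A \<Longrightarrow> card {a\<in>A. a < (x::nat)} < card A"
  by (rule psubset_card_mono) (simp, rule psubsetI, auto)

context
  fixes S :: "nat set" and d :: nat
  assumes S: "S \<subseteq> {..<d}"
begin

lemma shuffle_perm_front: "x \<in> S \<Longrightarrow> shuffle_perm S d x < card S"
  by (simp add: shuffle_perm_def card_less_less_card finite_subset[OF S finite_lessThan])

lemma shuffle_perm_back: "x < d \<Longrightarrow> x \<notin> S \<Longrightarrow> card S \<le> shuffle_perm S d x \<and> shuffle_perm S d x < d"
  using card_less_less_card[of "{..<d} - S" x] card_Diff_subset[OF finite_subset[OF S finite_lessThan] S]
    card_mono[OF _ S] by (simp add: shuffle_perm_def)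

lemma shuffle_perm_less_same_side:
  assumes "x < y" "y < d" "x \<in> S \<longleftrightarrow> y \<in> S"
  shows "shuffle_perm S d x < shuffle_perm S d y"
  using assms card_less_strict_mono[of S x y] card_less_strict_mono[of "{..<d} - S" x y] finite_subset[OF S finite_lessThan]
  by (auto simp: shuffle_perm_def)

lemma shuffle_perm_less_iff:
  assumes "x < d" "y < d"
  shows "shuffle_perm S d x < shuffle_perm S d y \<longleftrightarrow> (x \<in> S \<and> y \<notin> S) \<or> (x < y \<and> (x \<in> S \<longleftrightarrow> y \<in> S))"
proof (cases "x \<in> S \<longleftrightarrow> y \<in> S")
  case True
  then show ?thesis
    using assms shuffle_perm_less_same_side[of x y] shuffle_perm_less_same_side[of y x]
    by (cases x y rule: linorder_cases) auto
next
  case False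
  then show ?thesis
    using assms shuffle_perm_front[of x] shuffle_perm_back[of y] shuffle_perm_front[of y] shuffle_perm_back[of x]
    by (cases "x \<in> S") auto
qed

lemma shuffle_perm_permutes: "shuffle_perm S d permutes {..<d}"
proof (rule bij_imp_permutes)
  have inj: "inj_on (shuffle_perm S d) {..<d}"
    by (rule inj_onI) (metis lessThan_iff less_irrefl shuffle_perm_less_iff linorder_neqE_nat)
  moreover have "shuffle_perm S d ` {..<d} \<subseteq> {..<d}"
    using shuffle_perm_front shuffle_perm_back S card_mono[OF _ S] by fastforce
  ultimately show "bij_betw (shuffle_perm S d) {..<d} {..<d}"
    by (simp add: bij_betw_def endo_inj_surj)
qed (use S in \<open>auto simp: shuffle_perm_def\<close>)

lemma moves_to_front_shuffle_perm: "moves_to_front S (card S) d (shuffle_perm S d)"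
  unfolding moves_to_front_def using shuffle_perm_front shuffle_perm_back by (meson not_le)

lemma inversions_shuffle_perm: "inversions d (shuffle_perm S d) = forced_inversions S d"
  using shuffle_perm_less_iff by (auto simp: inversions_def forced_inversions_def)

lemma shuffle_perm_minreps: "shuffle_perm S d \<in> minreps (card S) d"
  unfolding minreps_def
proof (intro CollectI conjI allI impI)
  show "shuffle_perm S d permutes {..<d}"
    by (rule shuffle_perm_permutes)
  fix \<tau> assume \<tau>: "\<tau> permutes {..<d} \<and> \<tau> ` {..<card S} = {..<card S}"
  then have "\<tau> y < card S \<longleftrightarrow> y < card S" if "y < d" for y
    by (metis image_eqI lessThan_iff permutes_inj injD imageE)
  then have "moves_to_front S (card S) d (\<tau> \<circ> shuffle_perm S d)"
    using moves_to_front_shuffle_perm permutes_in_image[OF shuffle_perm_permutes]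
    by (auto simp: moves_to_front_def)
  then show "ninv d (shuffle_perm S d) \<le> ninv d (\<tau> \<circ> shuffle_perm S d)"
    using forced_inversions_subset
    by (simp add: ninv_eq_card_inversions inversions_shuffle_perm card_mono finite_inversions)
qed

text \<open>Each right coset of \<open>S\<^sub>k \<times> S\<^sub>d\<^sub>-\<^sub>k\<close> is \<open>{\<sigma>. moves_to_front S k d \<sigma>}\<close> for some \<open>S\<close>,
  and all its members have the forced inversions; the shortest one has no others.\<close>
lemma minreps_moves_to_front_eq: "{\<sigma>\<in>minreps (card S) d. moves_to_front S (card S) d \<sigma>} = {shuffle_perm S d}"
proof (intro equalityI subsetI)
  fix \<sigma> assume "\<sigma> \<in> {\<sigma>\<in>minreps (card S) d. moves_to_front S (card S) d \<sigma>}"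
  then have min: "\<sigma> \<in> minreps (card S) d" and front: "moves_to_front S (card S) d \<sigma>" by auto
  have \<sigma>: "\<sigma> permutes {..<d}"
    using min by (simp add: minreps_def)
  define \<tau> where "\<tau> = shuffle_perm S d \<circ> inv \<sigma>"
  have \<tau>: "\<tau> permutes {..<d}"
    unfolding \<tau>_def by (rule permutes_compose[OF permutes_inv[OF \<sigma>] shuffle_perm_permutes])
  have "\<tau> y < card S" if "y < card S" for y
  proof -
    have "y < d"
      using that card_mono[OF _ S] by simp
    then have "inv \<sigma> y \<in> S"
      using front[unfolded moves_to_front_def, rule_format, of "inv \<sigma> y"] that
        permutes_in_image[OF permutes_inv[OF \<sigma>]] permutes_inverses[OF \<sigma>] by simp
    then show ?thesis
      by (simp add: \<tau>_def shuffle_perm_front)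
  qed
  then have "\<tau> ` {..<card S} \<subseteq> {..<card S}"
    by auto
  then have "\<tau> ` {..<card S} = {..<card S}"
    by (intro endo_inj_surj) (auto intro: permutes_inj_on[OF \<tau>])
  moreover have "\<tau> \<circ> \<sigma> = shuffle_perm S d"
    by (simp add: \<tau>_def fun_eq_iff permutes_inverses[OF \<sigma>])
  ultimately have "card (inversions d \<sigma>) \<le> card (forced_inversions S d)"
    using min \<tau> by (auto simp: minreps_def ninv_eq_card_inversions inversions_shuffle_perm)
  then have "forced_inversions S d = inversions d \<sigma>"
    by (rule card_seteq[OF finite_inversions forced_inversions_subset[OF front]])
  then show "\<sigma> \<in> {shuffle_perm S d}"
    using permutes_eq_if_inversions_eq[OF \<sigma> shuffle_perm_permutes] by (simp add: inversions_shuffle_perm)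
qed (use shuffle_perm_minreps moves_to_front_shuffle_perm in auto)

end

section \<open>Linearity\<close>

global_interpretation fun_module: module "\<lambda>r (f :: 'a \<Rightarrow> 'r::comm_ring_1) x. r * f x"
  by unfold_locales (simp_all add: fun_eq_iff algebra_simps)

abbreviation linear_fun :: "(('a \<Rightarrow> 'r::comm_ring_1) \<Rightarrow> 'b \<Rightarrow> 'r) \<Rightarrow> bool" where
  "linear_fun g \<equiv> module_hom (\<lambda>r f x. r * f x) (\<lambda>r f x. r * f x) g"

lemma linear_funI:
  assumes lincomb: "\<And>x y r. g (\<lambda>i. x i + r * y i) = (\<lambda>i. g x i + r * g y i)"
  shows "linear_fun g"
proof -
  have "g 0 = 0"
    using lincomb[of 0 1 0] by (simp add: fun_eq_iff zero_fun_def)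
  then show ?thesis
    using lincomb[of _ 1] lincomb[of 0]
    by (simp add: module_hom_iff fun_module.module_axioms plus_fun_def zero_fun_def fun_eq_iff)
qed

lemma sum_fun_apply: "(\<Sum>i\<in>A. f i) x = (\<Sum>i\<in>A. f i x)"
  by (induction A rule: infinite_finite_induct) auto

lemma rspan_eq_span: "rspan S = fun_module.span S"
  by (auto simp: rspan_def fun_module.span_explicit sum_fun_apply fun_eq_iff)

lemma subspace_support: "fun_module.subspace {t. \<forall>c. t c \<noteq> 0 \<longrightarrow> P c}"
  unfolding fun_module.subspace_def by (auto, metis add.right_neutral, metis mult_zero_right)

lemma bilinear_span_subset:
  assumes "\<And>z. linear_fun (\<lambda>x. f x z)" "\<And>x. linear_fun (f x)"
    and T: "fun_module.subspace T" and gen: "\<And>x z. x \<in> A \<Longrightarrow> z \<in> B \<Longrightarrow> f x z \<in> T"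
    and "x \<in> fun_module.span A" "z \<in> fun_module.span B"
  shows "f x z \<in> T"
proof -
  have "fun_module.span B \<subseteq> f x -` T" if "x \<in> A" for x
    using gen[OF that] module_hom.subspace_vimage[OF assms(2) T] by (intro fun_module.span_minimal) auto
  then have "A \<subseteq> (\<Inter>z\<in>fun_module.span B. (\<lambda>x. f x z) -` T)"
    by blast
  moreover have "fun_module.subspace (\<Inter>z\<in>fun_module.span B. (\<lambda>x. f x z) -` T)"
    using module_hom.subspace_vimage[OF assms(1) T] by (intro fun_module.subspace_Int)
  ultimately show ?thesis
    using fun_module.span_minimal assms(5,6) by blast
qed

lemma act_lincomb: "act kd d \<sigma> (\<lambda>i. x i + r * y i) = (\<lambda>c. act kd d \<sigma> x c + r * act kd d \<sigma> y c)"
  unfolding act_def sum_distrib_left sum.distrib[symmetric] by (intro ext sum.cong) (auto simp: algebra_simps)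

lemma star_lincomb: "star kd k d (\<lambda>i. x i + r * y i) = (\<lambda>c. star kd k d x c + r * star kd k d y c)"
  by (simp add: star_def act_lincomb fun_eq_iff sum.distrib sum_distrib_left)

lemma ptensor_lincomb:
  "ptensor k (\<lambda>i. x i + r * y i) z = (\<lambda>c. ptensor k x z c + r * ptensor k y z c)"
  "ptensor k z (\<lambda>i. x i + r * y i) = (\<lambda>c. ptensor k z x c + r * ptensor k z y c)"
  by (auto simp: ptensor_def fun_eq_iff algebra_simps)

lemma tGamma_support:
  assumes "t \<in> tGamma kd lt n" "t c \<noteq> 0"
  shows "length c = n"
proof -
  have "yvec kd lt bs c \<noteq> 0 \<Longrightarrow> length c = length bs" for bs c
    by (auto simp: yvec_apply dest: mset_eq_length split: if_splits)
  then have "tGamma kd lt n \<subseteq> {t. \<forall>c. t c \<noteq> 0 \<longrightarrow> length c = n}"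
    unfolding tGamma_def rspan_eq_span by (intro fun_module.span_minimal subspace_support) (auto simp: Seq_def)
  then show ?thesis
    using assms by blast
qed

definition inl_prefix :: "nat \<Rightarrow> ('v + 'w) list \<Rightarrow> bool" where
  "inl_prefix k c \<longleftrightarrow> (\<forall>x\<in>set (take k c). isl x) \<and> (\<forall>x\<in>set (drop k c). \<not> isl x)"

lemma inl_prefix_iff_nth:
  assumes "k \<le> length c"
  shows "inl_prefix k c \<longleftrightarrow> (\<forall>j<length c. isl (c!j) \<longleftrightarrow> j < k)"
proof -
  have "(\<forall>x\<in>set (take k c). isl x) \<longleftrightarrow> (\<forall>j<k. isl (c!j))"
    using assms by (auto simp: all_set_conv_all_nth)
  moreover have "(\<forall>x\<in>set (drop k c). \<not> isl x) \<longleftrightarrow> (\<forall>j<length c. k \<le> j \<longrightarrow> \<not> isl (c!j))"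
  proof
    assume "\<forall>x\<in>set (drop k c). \<not> isl x"
    then have "\<forall>i<length c - k. \<not> isl (c ! (k + i))"
      by (simp add: all_set_conv_all_nth)
    then show "\<forall>j<length c. k \<le> j \<longrightarrow> \<not> isl (c!j)"
      by (metis add_diff_inverse_nat diff_less_mono not_le)
  qed (auto simp: all_set_conv_all_nth)
  ultimately show ?thesis
    unfolding inl_prefix_def using assms by (auto dest: order.strict_trans2)
qed

lemma inl_prefix_length_filter:
  assumes "inl_prefix k c" "k \<le> length c"
  shows "length (filter isl c) = k"
proof -
  have "filter isl c = take k c"
    using assms by (subst append_take_drop_id[symmetric, of c k], subst filter_append)
      (auto simp: inl_prefix_def filter_id_conv filter_empty_conv)
  then show ?thesis
    using assms(2) by simp
qed

lemma inl_prefix_permute_list_iff: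
  assumes \<sigma>: "\<sigma> permutes {..<length c}" and "k \<le> length c"
  shows "inl_prefix k (permute_list (inv \<sigma>) c)
    \<longleftrightarrow> moves_to_front {i. i < length c \<and> isl (c!i)} k (length c) \<sigma>"
proof -
  have \<sigma>': "inv \<sigma> permutes {..<length c}"
    using \<sigma> by (rule permutes_inv)
  have "inl_prefix k (permute_list (inv \<sigma>) c) \<longleftrightarrow> (\<forall>j<length c. isl (c ! inv \<sigma> j) \<longleftrightarrow> j < k)"
    using assms \<sigma>' by (simp add: inl_prefix_iff_nth permute_list_nth)
  also have "\<dots> \<longleftrightarrow> (\<forall>i<length c. isl (c ! i) \<longleftrightarrow> \<sigma> i < k)"
  proof (rule iffI; intro allI impI)
    fix i assume H: "\<forall>j<length c. isl (c ! inv \<sigma> j) \<longleftrightarrow> j < k" and "i < length c"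
    then show "isl (c ! i) \<longleftrightarrow> \<sigma> i < k"
      using H[rule_format, of "\<sigma> i"] permutes_in_image[OF \<sigma>] permutes_inverses(2)[OF \<sigma>] by simp
  next
    fix j assume H: "\<forall>i<length c. isl (c ! i) \<longleftrightarrow> \<sigma> i < k" and "j < length c"
    then show "isl (c ! inv \<sigma> j) \<longleftrightarrow> j < k"
      using H[rule_format, of "inv \<sigma> j"] permutes_in_image[OF \<sigma>'] permutes_inverses(1)[OF \<sigma>] by simp
  qed
  finally show ?thesis
    by (auto simp: moves_to_front_def)
qed

lemma sum_minreps_moves_to_front:
  assumes "S \<subseteq> {..<d}"
  shows "(\<Sum>\<sigma>\<in>minreps (card S) d. if moves_to_front S (card S) d \<sigma> then g \<sigma> else 0) = g (shuffle_perm S d)"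
proof -
  have "finite (minreps (card S) d)"
    by (rule finite_subset[OF _ finite_permutations[of "{..<d}"]]) (auto simp: minreps_def)
  then show ?thesis
    by (simp add: sum.inter_filter[symmetric] minreps_moves_to_front_eq[OF assms])
qed

lemma star_apply:
  fixes t :: "('v::finite + 'w::finite) list \<Rightarrow> 'r::comm_ring_1"
  assumes supp: "\<And>c'. t c' \<noteq> 0 \<Longrightarrow> inl_prefix k c'" and "k \<le> d" and c: "length c = d"
  shows "star kd k d t c = (if length (filter isl c) = k
    then act kd d (shuffle_perm {i. i < d \<and> isl (c!i)} d) t c else 0)"
proof -
  define S where "S = {i. i < d \<and> isl (c!i)}"
  have S: "S \<subseteq> {..<d}" and card_S: "card S = length (filter isl c)"
    using c by (auto simp: S_def length_filter_conv_card)
  have act_eq: "act kd d \<sigma> t c = (if moves_to_front S k d \<sigma> then act kd d \<sigma> t c else 0)"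
    if "\<sigma> \<in> minreps k d" for \<sigma>
  proof -
    have \<sigma>: "\<sigma> permutes {..<d}"
      using that by (simp add: minreps_def)
    have "t (permute_list (inv \<sigma>) c) = 0" if "\<not> moves_to_front S k d \<sigma>"
      using that supp inl_prefix_permute_list_iff[of \<sigma> c k] \<sigma> c \<open>k \<le> d\<close> by (auto simp: S_def)
    then show ?thesis
      by (simp add: act_apply[OF \<sigma>])
  qed
  show ?thesis
  proof (cases "length (filter isl c) = k")
    case True
    then have "star kd k d t c = (\<Sum>\<sigma>\<in>minreps (card S) d. if moves_to_front S (card S) d \<sigma> then act kd d \<sigma> t c else 0)"
      unfolding star_def card_S using act_eq by (intro sum.cong) auto
    also have "\<dots> = act kd d (shuffle_perm S d) t c"
      by (rule sum_minreps_moves_to_front[OF S])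
    finally show ?thesis
      using True by (simp add: S_def)
  next
    case False
    then have "\<not> moves_to_front S k d \<sigma>" if "\<sigma> \<in> minreps k d" for \<sigma>
      using card_moves_to_front[OF _ _ S \<open>k \<le> d\<close>] that card_S by (auto simp: minreps_def)
    then show ?thesis
      unfolding star_def using act_eq False by (auto intro!: sum.neutral)
  qed
qed

lemma shuffle_perm_lessThan: "k \<le> d \<Longrightarrow> shuffle_perm {..<k} d = id"
proof
  fix x assume "k \<le> d"
  show "shuffle_perm {..<k} d x = id x"
  proof (cases "x < k")
    case True
    then have "{s \<in> {..<k}. s < x} = {..<x}" by auto
    then show ?thesis using True by (simp add: shuffle_perm_def)
  next
    case False
    then have "{s \<in> {..<d} - {..<k}. s < x} = {k..<x}" if "x < d" using that by auto
    then show ?thesis using False \<open>k \<le> d\<close> by (simp add: shuffle_perm_def)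
  qed
qed

lemma act_id: "act kd d id t c = (if length c = d then t c else 0)"
proof -
  have "sgn_exp kd id c = card ({} :: (nat \<times> nat) set)"
    unfolding sgn_exp_def inv_id by (rule arg_cong[where f = card]) auto
  then show ?thesis
    by (simp add: act_apply permutes_id)
qed

lemma star_apply_inl_prefix:
  fixes t :: "('v::finite + 'w::finite) list \<Rightarrow> 'r::comm_ring_1"
  assumes "\<And>c'. t c' \<noteq> 0 \<Longrightarrow> inl_prefix j c'" "j \<le> d"
    and c: "length c = d" "inl_prefix k c" "k \<le> d"
  shows "star kd j d t c = (if j = k then t c else 0)"
proof -
  have "length (filter isl c) = k"
    using c by (simp add: inl_prefix_length_filter)
  moreover have "{i. i < d \<and> isl (c!i)} = {..<k}"
    using c by (auto simp: inl_prefix_iff_nth)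
  ultimately show ?thesis
    using c by (simp add: star_apply[OF assms(1,2) c(1)] shuffle_perm_lessThan act_id)
qed

lemma ptensor_apply:
  "ptensor k y y' c = (if inl_prefix k c then y (map projl (take k c)) * y' (map projr (drop k c)) else 0)"
  unfolding ptensor_def inl_prefix_def ..

lemma ptensor_yvec:
  fixes kV :: "'v::finite \<Rightarrow> kind" and kW :: "'w::finite \<Rightarrow> kind"
  assumes "strict_total ltV" "strict_total ltW" "strict_total ltS"
    and "odd_distinct kV bV" "odd_distinct kW bW"
  shows "ptensor k (yvec kV ltV bV) (yvec kW ltW bW) c =
     (if inl_prefix k c then (yvec (sumkind kV kW) ltS (map Inl bV @ map Inr bW) c :: 'r::comm_ring_1) else 0)"
proof (cases "inl_prefix k c")
  case True
  then have "c = map Inl (map projl (take k c)) @ map Inr (map projr (drop k c))"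
    by (simp add: inl_prefix_def map_idI)
  then show ?thesis
    using True yvec_append_Inl_Inr[OF assms, of "map projl (take k c)" "map projr (drop k c)", where 'r = 'r]
    by (simp add: ptensor_apply)
qed (simp add: ptensor_apply)

lemma star_restrict_inl_prefix:
  fixes y :: "('v::finite + 'w::finite) list \<Rightarrow> 'r::comm_ring_1"
  assumes symmetric: "\<And>\<sigma> c. \<sigma> permutes {..<length c} \<Longrightarrow> (-1) ^ sgn_exp kd \<sigma> c * y c = y (permute_list \<sigma> c)"
    and supp: "\<And>c. y c \<noteq> 0 \<Longrightarrow> length c = d \<and> length (filter isl c) = k" and "k \<le> d"
  shows "star kd k d (\<lambda>c. if inl_prefix k c then y c else 0) = y"
proof
  fix c
  let ?t = "\<lambda>c. if inl_prefix k c then y c else 0"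
  show "star kd k d ?t c = y c"
  proof (cases "length c = d")
    case c: True
    define S where "S = {i. i < d \<and> isl (c!i)}"
    define \<sigma> where "\<sigma> = shuffle_perm S d"
    have t_supp: "?t c' \<noteq> 0 \<Longrightarrow> inl_prefix k c'" for c'
      by (simp split: if_splits)
    have star_eq: "star kd k d ?t c = (if length (filter isl c) = k then act kd d \<sigma> ?t c else 0)"
      using star_apply[where t = ?t and kd = kd, OF t_supp \<open>k \<le> d\<close> c] by (simp add: \<sigma>_def S_def)
    show ?thesis
    proof (cases "length (filter isl c) = k")
      case True
      have S: "S \<subseteq> {..<d}" "card S = k"
        using c True by (auto simp: S_def length_filter_conv_card)
      then have \<sigma>: "\<sigma> permutes {..<length c}" "moves_to_front S k d \<sigma>"
        unfolding \<sigma>_def using shuffle_perm_permutes moves_to_front_shuffle_perm c by auto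
      then show ?thesis
        using star_eq True c \<open>k \<le> d\<close> inl_prefix_permute_list_iff[OF \<sigma>(1), of k]
          symmetric[of \<sigma> "permute_list (inv \<sigma>) c"]
        by (simp add: act_apply S_def permute_list_inv_cancel)
    next
      case False
      then show ?thesis
        using star_eq supp[of c] by auto
    qed
  next
    case False
    then show ?thesis
      using supp by (auto simp: star_def act_apply minreps_def intro!: sum.neutral)
  qed
qed

lemma star_ptensor_yvec:
  fixes kV :: "'v::finite \<Rightarrow> kind" and kW :: "'w::finite \<Rightarrow> kind"
  assumes lt: "strict_total ltV" "strict_total ltW" "strict_total ltS"
    and bV: "odd_distinct kV bV" "length bV = k" and bW: "odd_distinct kW bW" "length bW = d - k"
    and "k \<le> d"
  shows "star (sumkind kV kW) k d (ptensor k (yvec kV ltV bV) (yvec kW ltW bW)) =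
     (yvec (sumkind kV kW) ltS (map Inl bV @ map Inr bW) :: _ \<Rightarrow> 'r::comm_ring_1)"
proof -
  let ?B = "map Inl bV @ map Inr bW"
  have dist: "odd_distinct (sumkind kV kW) ?B"
    using bV bW by (simp add: odd_distinct_append_Inl_Inr)
  have supp: "length c = d \<and> length (filter isl c) = k" if "(yvec (sumkind kV kW) ltS ?B c :: 'r) \<noteq> 0" for c
  proof -
    have "mset c = mset ?B"
      using that by (simp add: yvec_apply split: if_splits)
    then have "length c = length ?B" "length (filter isl c) = length (filter isl ?B)"
      by (metis mset_eq_length, metis mset_filter size_mset)
    then show ?thesis
      using bV bW \<open>k \<le> d\<close> by (simp add: filter_map comp_def)
  qed
  have "ptensor k (yvec kV ltV bV) (yvec kW ltW bW)
      = (\<lambda>c. if inl_prefix k c then (yvec (sumkind kV kW) ltS ?B c :: 'r) else 0)"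
    by (intro ext) (rule ptensor_yvec[OF lt bV(1) bW(1)])
  then show ?thesis
    using star_restrict_inl_prefix[OF yvec_permute_list[OF lt(3) dist] supp \<open>k \<le> d\<close>] by simp
qed

section \<open>The map \<open>\<Phi>\<close>\<close>

lemma Phi_lincomb:
  "Phi kV kW d (\<lambda>k x. m k x + r * m' k x) = (\<lambda>x. Phi kV kW d m x + r * Phi kV kW d m' x)"
  unfolding Phi_def by (simp add: star_lincomb sum.distrib sum_distrib_left)

lemma subspace_tens_sub: "fun_module.subspace (tens_sub kV ltV kW ltW k l)"
  by (simp add: tens_sub_def rspan_eq_span)

lemma zero_in_dsum_dom: "(\<lambda>k x. 0) \<in> dsum_dom kV ltV kW ltW d"
  using fun_module.subspace_0[OF subspace_tens_sub] by (auto simp: dsum_dom_def zero_fun_def)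

lemma dsum_dom_lincomb:
  assumes "m \<in> dsum_dom kV ltV kW ltW d" "m' \<in> dsum_dom kV ltV kW ltW d"
  shows "(\<lambda>k x. m k x + r * m' k x) \<in> dsum_dom kV ltV kW ltW d"
proof -
  have "(\<lambda>x. m k x + r * m' k x) \<in> tens_sub kV ltV kW ltW k (d - k)" if "k \<le> d" for k
    using assms that fun_module.subspace_add[OF subspace_tens_sub _ fun_module.subspace_scale[OF subspace_tens_sub]]
    by (fastforce simp: dsum_dom_def plus_fun_def)
  then show ?thesis
    using assms by (simp add: dsum_dom_def)
qed

lemma tens_sub_support:
  assumes "t \<in> tens_sub kV ltV kW ltW k (d - k)" "k \<le> d" "t c \<noteq> 0"
  shows "length c = d \<and> inl_prefix k c"
proof -
  have "ptensor k y y' c \<noteq> 0 \<Longrightarrow> length c = d \<and> inl_prefix k c"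
    if "y \<in> tGamma kV ltV k" "y' \<in> tGamma kW ltW (d - k)" for y y' c
    using tGamma_support[OF that(1), of "map projl (take k c)"] tGamma_support[OF that(2), of "map projr (drop k c)"]
      \<open>k \<le> d\<close> by (auto simp: ptensor_apply split: if_splits dest: mult_not_zero)
  then have "tens_sub kV ltV kW ltW k (d - k) \<subseteq> {t. \<forall>c. t c \<noteq> 0 \<longrightarrow> length c = d \<and> inl_prefix k c}"
    unfolding tens_sub_def rspan_eq_span by (intro fun_module.span_minimal subspace_support) auto
  then show ?thesis
    using assms by blast
qed

lemma dsum_dom_support:
  assumes "m \<in> dsum_dom kV ltV kW ltW d" "m k c \<noteq> 0"
  shows "k \<le> d \<and> length c = d \<and> inl_prefix k c"
proof (cases "k \<le> d")
  case True
  then show ?thesis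
    using assms tens_sub_support[of "m k" kV ltV kW ltW k d c] by (simp add: dsum_dom_def)
qed (use assms in \<open>simp add: dsum_dom_def\<close>)

lemma star_ptensor_in_tGamma:
  fixes kV :: "'v::finite \<Rightarrow> kind" and kW :: "'w::finite \<Rightarrow> kind"
    and y :: "'v list \<Rightarrow> 'r::comm_ring_1" and y' :: "'w list \<Rightarrow> 'r"
  assumes lt: "strict_total ltV" "strict_total ltW" "strict_total ltS"
    and "y \<in> tGamma kV ltV k" "y' \<in> tGamma kW ltW (d - k)" "k \<le> d"
  shows "star (sumkind kV kW) k d (ptensor k y y') \<in> tGamma (sumkind kV kW) ltS d"
proof (rule bilinear_span_subset[where f = "\<lambda>y z. star (sumkind kV kW) k d (ptensor k y z)"])
  show "linear_fun (\<lambda>y. star (sumkind kV kW) k d (ptensor k y z))" for z :: "_ \<Rightarrow> 'r"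
    by (rule linear_funI) (simp add: ptensor_lincomb star_lincomb)
  show "linear_fun (\<lambda>z. star (sumkind kV kW) k d (ptensor k y z))" for y :: "_ \<Rightarrow> 'r"
    by (rule linear_funI) (simp add: ptensor_lincomb star_lincomb)
  show "fun_module.subspace (tGamma (sumkind kV kW) ltS d :: (_ \<Rightarrow> 'r) set)"
    by (simp add: tGamma_def rspan_eq_span)
  show "y \<in> fun_module.span {yvec kV ltV bV |bV. bV \<in> Seq kV k}"
    "y' \<in> fun_module.span {yvec kW ltW bW |bW. bW \<in> Seq kW (d - k)}"
    using assms(4,5) by (simp_all add: tGamma_def rspan_eq_span)
  fix x :: "'v list \<Rightarrow> 'r" and z :: "'w list \<Rightarrow> 'r"
  assume "x \<in> {yvec kV ltV bV |bV. bV \<in> Seq kV k}" "z \<in> {yvec kW ltW bW |bW. bW \<in> Seq kW (d - k)}"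
  then obtain bV bW where x: "x = yvec kV ltV bV" "bV \<in> Seq kV k" and z: "z = yvec kW ltW bW" "bW \<in> Seq kW (d - k)"
    by blast
  then have bV: "odd_distinct kV bV" "length bV = k" and bW: "odd_distinct kW bW" "length bW = d - k"
    by (simp_all add: Seq_eq_odd_distinct)
  then have "map Inl bV @ map Inr bW \<in> Seq (sumkind kV kW) d"
    using \<open>k \<le> d\<close> by (simp add: Seq_eq_odd_distinct odd_distinct_append_Inl_Inr)
  then show "star (sumkind kV kW) k d (ptensor k x z) \<in> tGamma (sumkind kV kW) ltS d"
    unfolding x z star_ptensor_yvec[OF lt bV bW \<open>k \<le> d\<close>] tGamma_def rspan_eq_span
    by (auto intro: fun_module.span_base)
qed

lemma star_tens_sub_in_tGamma:
  fixes kV :: "'v::finite \<Rightarrow> kind" and kW :: "'w::finite \<Rightarrow> kind"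
  assumes lt: "strict_total ltV" "strict_total ltW" "strict_total ltS"
    and t: "t \<in> (tens_sub kV ltV kW ltW k (d - k) :: (_ \<Rightarrow> 'r::comm_ring_1) set)" and "k \<le> d"
  shows "star (sumkind kV kW) k d t \<in> tGamma (sumkind kV kW) ltS d"
proof -
  let ?TG = "tGamma (sumkind kV kW) ltS d :: (_ \<Rightarrow> 'r) set"
  have "linear_fun (star (sumkind kV kW) k d)"
    by (rule linear_funI) (rule star_lincomb)
  moreover have "fun_module.subspace ?TG"
    by (simp add: tGamma_def rspan_eq_span)
  ultimately have "tens_sub kV ltV kW ltW k (d - k) \<subseteq> star (sumkind kV kW) k d -` ?TG"
    unfolding tens_sub_def rspan_eq_span using star_ptensor_in_tGamma[OF lt _ _ \<open>k \<le> d\<close>]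
    by (intro fun_module.span_minimal module_hom.subspace_vimage) auto
  then show ?thesis
    using t by blast
qed

lemma Phi_in_tGamma:
  fixes kV :: "'v::finite \<Rightarrow> kind" and kW :: "'w::finite \<Rightarrow> kind"
    and m :: "nat \<Rightarrow> ('v + 'w) list \<Rightarrow> 'r::comm_ring_1"
  assumes "strict_total ltV" "strict_total ltW" "strict_total ltS"
    and m: "m \<in> dsum_dom kV ltV kW ltW d"
  shows "Phi kV kW d m \<in> tGamma (sumkind kV kW) ltS d"
proof -
  have "star (sumkind kV kW) k d (m k) \<in> tGamma (sumkind kV kW) ltS d" if "k \<in> {..d}" for k
    using star_tens_sub_in_tGamma[OF assms(1-3), of "m k" kV kW k d] m that by (simp add: dsum_dom_def)
  then have "(\<Sum>k\<le>d. star (sumkind kV kW) k d (m k)) \<in> tGamma (sumkind kV kW) ltS d"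
    by (intro fun_module.subspace_sum) (auto simp: tGamma_def rspan_eq_span)
  moreover have "Phi kV kW d m = (\<Sum>k\<le>d. star (sumkind kV kW) k d (m k))"
    by (simp add: Phi_def fun_eq_iff sum_fun_apply)
  ultimately show ?thesis
    by simp
qed

lemma Phi_apply_inl_prefix:
  fixes kV :: "'v::finite \<Rightarrow> kind" and kW :: "'w::finite \<Rightarrow> kind"
    and m :: "nat \<Rightarrow> ('v + 'w) list \<Rightarrow> 'r::comm_ring_1"
  assumes m: "m \<in> dsum_dom kV ltV kW ltW d" and c: "length c = d" "inl_prefix k c" "k \<le> d"
  shows "Phi kV kW d m c = m k c"
proof -
  have "star (sumkind kV kW) j d (m j) c = (if j = k then m j c else 0)" if "j \<le> d" for j
  proof -
    have "m j c' \<noteq> 0 \<Longrightarrow> inl_prefix j c'" for c'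
      using dsum_dom_support[OF m] by blast
    then show ?thesis
      by (rule star_apply_inl_prefix[OF _ that c])
  qed
  then show ?thesis
    using c by (simp add: Phi_def)
qed

lemma inj_on_Phi:
  fixes kV :: "'v::finite \<Rightarrow> kind" and kW :: "'w::finite \<Rightarrow> kind"
  shows "inj_on (Phi kV kW d) (dsum_dom kV ltV kW ltW d)"
proof (rule inj_onI, intro ext)
  fix m m' :: "nat \<Rightarrow> ('v + 'w) list \<Rightarrow> 'r::comm_ring_1" and k c
  assume m: "m \<in> dsum_dom kV ltV kW ltW d" and m': "m' \<in> dsum_dom kV ltV kW ltW d"
    and eq: "Phi kV kW d m = Phi kV kW d m'"
  show "m k c = m' k c"
  proof (cases "k \<le> d \<and> length c = d \<and> inl_prefix k c")
    case True
    then show ?thesis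
      using eq Phi_apply_inl_prefix[OF m] Phi_apply_inl_prefix[OF m'] by metis
  next
    case False
    then show ?thesis
      using dsum_dom_support[OF m] dsum_dom_support[OF m'] by metis
  qed
qed

lemma star_zero: "star kd k d (\<lambda>_. 0) = (\<lambda>_. 0)"
  by (auto simp: star_def act_def fun_eq_iff intro!: sum.neutral)

lemma Phi_zero: "Phi kV kW d (\<lambda>k x. 0) = 0"
  by (simp add: Phi_def star_zero zero_fun_def)

lemma subspace_Phi_image:
  fixes kV :: "'v::finite \<Rightarrow> kind" and kW :: "'w::finite \<Rightarrow> kind"
  shows "fun_module.subspace (Phi kV kW d ` (dsum_dom kV ltV kW ltW d :: (nat \<Rightarrow> ('v + 'w) list \<Rightarrow> 'r::comm_ring_1) set))"
    (is "fun_module.subspace (Phi kV kW d ` ?D)")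
proof (rule fun_module.subspaceI)
  show "0 \<in> Phi kV kW d ` ?D"
    using Phi_zero zero_in_dsum_dom by (metis image_eqI)
next
  fix x y assume "x \<in> Phi kV kW d ` ?D" "y \<in> Phi kV kW d ` ?D"
  then obtain m m' where m: "m \<in> ?D" "m' \<in> ?D" and xy: "x = Phi kV kW d m" "y = Phi kV kW d m'"
    by blast
  have "x + y = Phi kV kW d (\<lambda>k x. m k x + 1 * m' k x)"
    unfolding xy Phi_lincomb by (simp add: plus_fun_def)
  then show "x + y \<in> Phi kV kW d ` ?D"
    using dsum_dom_lincomb[OF m] by blast
next
  fix r x assume "x \<in> Phi kV kW d ` ?D"
  then obtain m where m: "m \<in> ?D" and x: "x = Phi kV kW d m"
    by blast
  have "(\<lambda>i. r * x i) = Phi kV kW d (\<lambda>k x. 0 + r * m k x)"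
    unfolding x Phi_lincomb Phi_zero by simp
  then show "(\<lambda>i. r * x i) \<in> Phi kV kW d ` ?D"
    using dsum_dom_lincomb[OF zero_in_dsum_dom m] by blast
qed

lemma Phi_single:
  assumes "k \<le> d"
  shows "Phi kV kW d (\<lambda>j. if j = k then t else (\<lambda>_. 0)) = star (sumkind kV kW) k d t"
proof -
  have "star (sumkind kV kW) j d (if j = k then t else (\<lambda>_. 0)) x = (if j = k then star (sumkind kV kW) k d t x else 0)"
    for j x
    by (simp add: star_zero)
  then show ?thesis
    using assms by (simp add: Phi_def fun_eq_iff)
qed

lemma yvec_append_in_Phi_image:
  fixes kV :: "'v::finite \<Rightarrow> kind" and kW :: "'w::finite \<Rightarrow> kind"
  assumes lt: "strict_total ltV" "strict_total ltW" "strict_total ltS"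
    and bV: "odd_distinct kV bV" and bW: "odd_distinct kW bW" and d: "length bV + length bW = d"
  shows "(yvec (sumkind kV kW) ltS (map Inl bV @ map Inr bW) :: _ \<Rightarrow> 'r::comm_ring_1)
    \<in> Phi kV kW d ` (dsum_dom kV ltV kW ltW d :: (nat \<Rightarrow> ('v + 'w) list \<Rightarrow> 'r) set)"
proof -
  let ?k = "length bV"
  define t where "t = ptensor ?k (yvec kV ltV bV) (yvec kW ltW bW :: _ \<Rightarrow> 'r)"
  have k: "length bW = d - ?k" "?k \<le> d"
    using d by auto
  have "yvec kV ltV bV \<in> tGamma kV ltV ?k" "yvec kW ltW bW \<in> tGamma kW ltW (d - ?k)"
    using bV bW k by (auto simp: tGamma_def Seq_eq_odd_distinct rspan_eq_span intro!: fun_module.span_base)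
  then have "t \<in> tens_sub kV ltV kW ltW ?k (d - ?k)"
    unfolding tens_sub_def rspan_eq_span t_def by (intro fun_module.span_base) blast
  then have m: "(\<lambda>j. if j = ?k then t else (\<lambda>_. 0)) \<in> dsum_dom kV ltV kW ltW d"
    using fun_module.subspace_0[OF subspace_tens_sub] k by (auto simp: dsum_dom_def zero_fun_def)
  have "Phi kV kW d (\<lambda>j. if j = ?k then t else (\<lambda>_. 0)) = yvec (sumkind kV kW) ltS (map Inl bV @ map Inr bW)"
    unfolding t_def Phi_single[OF k(2)] by (rule star_ptensor_yvec[OF lt bV refl bW k])
  then show ?thesis
    by (rule image_eqI[OF sym m])
qed

lemma mset_eq_append_Inl_Inr:
  obtains a b where "mset (map Inl a @ map Inr b) = mset xs"
proof
  have "map Inl (map projl (filter isl xs)) @ map Inr (map projr (filter (\<lambda>x. \<not> isl x) xs))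
      = filter isl xs @ filter (\<lambda>x. \<not> isl x) xs"
    by (auto simp: comp_def intro!: map_idI)
  then show "mset (map Inl (map projl (filter isl xs)) @ map Inr (map projr (filter (\<lambda>x. \<not> isl x) xs))) = mset xs"
    by (simp flip: multiset_partition)
qed

lemma yvec_in_Phi_image:
  fixes kV :: "'v::finite \<Rightarrow> kind" and kW :: "'w::finite \<Rightarrow> kind"
  assumes lt: "strict_total ltV" "strict_total ltW" "strict_total ltS"
    and B: "B \<in> Seq (sumkind kV kW) d"
  shows "(yvec (sumkind kV kW) ltS B :: _ \<Rightarrow> 'r::comm_ring_1)
    \<in> Phi kV kW d ` (dsum_dom kV ltV kW ltW d :: (nat \<Rightarrow> ('v + 'w) list \<Rightarrow> 'r) set)"
    (is "_ \<in> Phi kV kW d ` ?D")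
proof -
  obtain bV bW where B': "mset (map Inl bV @ map Inr bW) = mset B"
    by (rule mset_eq_append_Inl_Inr)
  moreover have "length (map Inl bV @ map Inr bW) = length B"
    using B' by (rule mset_eq_length)
  ultimately have "odd_distinct (sumkind kV kW) (map Inl bV @ map Inr bW)" "length bV + length bW = d"
    using B by (simp_all add: Seq_eq_odd_distinct odd_distinct_def)
  then have "(yvec (sumkind kV kW) ltS (map Inl bV @ map Inr bW) :: _ \<Rightarrow> 'r) \<in> Phi kV kW d ` ?D"
    by (intro yvec_append_in_Phi_image[OF lt]) (simp_all add: odd_distinct_append_Inl_Inr)
  then show ?thesis
    unfolding yvec_mset_eq[OF B'[symmetric]] by (rule fun_module.subspace_scale[OF subspace_Phi_image])
qed

lemma Phi_image:
  fixes kV :: "'v::finite \<Rightarrow> kind" and kW :: "'w::finite \<Rightarrow> kind"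
  assumes "strict_total ltV" "strict_total ltW" "strict_total ltS"
  shows "Phi kV kW d ` (dsum_dom kV ltV kW ltW d :: (nat \<Rightarrow> ('v + 'w) list \<Rightarrow> 'r::comm_ring_1) set)
    = tGamma (sumkind kV kW) ltS d" (is "Phi kV kW d ` ?D = ?TG")
proof
  show "Phi kV kW d ` ?D \<subseteq> ?TG"
    using Phi_in_tGamma[OF assms] by blast
  show "?TG \<subseteq> Phi kV kW d ` ?D"
    unfolding tGamma_def rspan_eq_span
    by (rule fun_module.span_minimal[OF _ subspace_Phi_image]) (auto intro: yvec_in_Phi_image[OF assms])
qed

lemma homog_act:
  fixes kd :: "'b::finite \<Rightarrow> kind"
  assumes \<sigma>: "\<sigma> permutes {..<d}" and t: "homog kd p t"
  shows "homog kd p (act kd d \<sigma> t)"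
  unfolding homog_def
proof (intro allI impI)
  fix c assume "act kd d \<sigma> t c \<noteq> 0"
  then have c: "length c = d" and "t (permute_list (inv \<sigma>) c) \<noteq> 0"
    by (auto simp: act_apply[OF \<sigma>] split: if_splits)
  then have "odd (length (filter (\<lambda>b. kd b = KOdd) (permute_list (inv \<sigma>) c))) = p"
    using t by (simp add: homog_def)
  moreover have "mset (permute_list (inv \<sigma>) c) = mset c"
    using permutes_inv[OF \<sigma>] c by simp
  ultimately show "odd (length (filter (\<lambda>b. kd b = KOdd) c)) = p"
    by (metis mset_filter size_mset)
qed

lemma homog_sum:
  assumes "\<And>i. i \<in> I \<Longrightarrow> homog kd p (f i)"
  shows "homog kd p (\<lambda>x. \<Sum>i\<in>I. f i x)"
  unfolding homog_def
proof (intro allI impI)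
  fix c assume "(\<Sum>i\<in>I. f i c) \<noteq> 0"
  then obtain i where "i \<in> I" "f i c \<noteq> 0"
    by (meson sum.not_neutral_contains_not_neutral)
  then show "odd (length (filter (\<lambda>b. kd b = KOdd) c)) = p"
    using assms by (auto simp: homog_def)
qed

lemma homog_Phi:
  fixes kV :: "'v::finite \<Rightarrow> kind" and kW :: "'w::finite \<Rightarrow> kind"
  assumes "\<And>k. homog (sumkind kV kW) p (m k)"
  shows "homog (sumkind kV kW) p (Phi kV kW d m)"
  unfolding Phi_def star_def
  using assms by (intro homog_sum homog_act) (auto simp: minreps_def)

theorem lemma3p5:
  fixes kV :: "'v::finite \<Rightarrow> kind" and ltV :: "'v \<Rightarrow> 'v \<Rightarrow> bool"
    and kW :: "'w::finite \<Rightarrow> kind" and ltW :: "'w \<Rightarrow> 'w \<Rightarrow> bool"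
    and ltS :: "('v + 'w) \<Rightarrow> ('v + 'w) \<Rightarrow> bool"
    and d :: nat
  assumes "pid TYPE('r::{idom, ring_char_0})"
    and "strict_total ltV" and "strict_total ltW" and "strict_total ltS"
  shows "bij_betw (Phi kV kW d) (dsum_dom kV ltV kW ltW d :: (nat \<Rightarrow> ('v + 'w) list \<Rightarrow> 'r) set)
                  (tGamma (sumkind kV kW) ltS d)
    \<and> (\<forall>m\<in>dsum_dom kV ltV kW ltW d. \<forall>m'\<in>dsum_dom kV ltV kW ltW d. \<forall>r::'r.
          Phi kV kW d (\<lambda>k x. m k x + r * m' k x) = (\<lambda>x. Phi kV kW d m x + r * Phi kV kW d m' x))
    \<and> (\<forall>m\<in>(dsum_dom kV ltV kW ltW d :: (nat \<Rightarrow> ('v + 'w) list \<Rightarrow> 'r) set). \<forall>p.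
          (\<forall>k. homog (sumkind kV kW) p (m k)) \<longrightarrow> homog (sumkind kV kW) p (Phi kV kW d m))"
proof (intro conjI ballI allI impI)
  show "bij_betw (Phi kV kW d) (dsum_dom kV ltV kW ltW d :: (nat \<Rightarrow> ('v + 'w) list \<Rightarrow> 'r) set)
                  (tGamma (sumkind kV kW) ltS d)"
    unfolding bij_betw_def using inj_on_Phi Phi_image[OF assms(2-4)] by blast
qed (simp_all add: Phi_lincomb homog_Phi)

end
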